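(* Let $\nu=\{-\pi=s_0<s_1<\dots<s_l=\pi\}$ be a partition of $[-\pi,\pi]$ with mesh $\rho:=\max_i|s_{i+1}-s_i|$, and let $\lfloor t\rfloor:=\max\{z\in\nu:z\le t\}$. Let $r>1$, $N\in\mathbb N$ and $t\in[-\pi,\pi]$. Then $$\int_{-\pi}^t\big|D_N(\lfloor t\rfloor-\lfloor s\rfloor)\big|^r\,ds\le 5\big(\rho+(2N+1)^{-1}\big)(2N+1)^r+\frac{2\pi^r}{r-1}(2N+1)^{r-1},$$ and consequently $\int_{-\pi}^t|\tilde D_N(\lfloor t\rfloor-\lfloor s\rfloor)|^r\,ds\le 5\rho+(2N+1)^{-1}\big(5+\frac{2\pi^r}{r-1}\big)$.
   Context: $D_N(t):=\sum_{|l|\le N}e^{ilt}$ ($i$ the imaginary unit) is the Dirichlet kernel, $D_N(t)=\frac{\sin((N+1/2)t)}{\sin(t/2)}$, and $\tilde D_N:=D_N/(2N+1)$. *)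

theory Defs
  imports "HOL-Analysis.Analysis"
begin

definition dirichlet :: "nat \<Rightarrow> real \<Rightarrow> complex" where
  "dirichlet N t = (\<Sum>k\<in>{-int N..int N}. exp (\<i> * complex_of_real (real_of_int k * t)))"

definition dirichlet_tilde :: "nat \<Rightarrow> real \<Rightarrow> complex" where
  "dirichlet_tilde N t = dirichlet N t / of_nat (2 * N + 1)"

definition part_floor :: "real set \<Rightarrow> real \<Rightarrow> real" where
  "part_floor \<nu> t = Max {z \<in> \<nu>. z \<le> t}"

definition mesh :: "(nat \<Rightarrow> real) \<Rightarrow> nat \<Rightarrow> real" where
  "mesh s l = Max {s (Suc i) - s i | i. i < l}"

end

theory Submission
  imports Defs
begin

text \<open>
  Write \<open>\<tau>\<close> for the partition floor of t and \<open>\<rho>\<close> for the mesh. Besides the trivial bound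
  \<open>|D\<^sub>N| \<le> 2N+1\<close>, the geometric sum gives \<open>|D\<^sub>N(v) sin(v/2)| \<le> 1\<close>, so by Jordan's inequality
  \<open>|D\<^sub>N(v)| \<le> \<pi> / min v (2\<pi> - v)\<close> on \<open>(0, 2\<pi>)\<close>. For \<open>-\<pi> \<le> x \<le> t\<close> the argument
  \<open>v = \<tau> - \<lfloor>x\<rfloor>\<close> satisfies \<open>v \<ge> \<tau> - x\<close> and \<open>2\<pi> - v \<ge> x + \<pi> - \<rho>\<close>. Hence, for any
  \<open>a > 0\<close>, outside two windows of length \<open>\<rho> + a\<close> (next to \<open>\<tau>\<close> and next to \<open>-\<pi>\<close>) the
  integrand is dominated by \<open>\<pi> powr r * ((\<tau> - x) powr -r + (x + \<pi> - \<rho>) powr -r)\<close>, whose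
  integral is at most \<open>2 \<pi> powr r * a powr (1 - r) / (r - 1)\<close>. The choice \<open>a = 1/(2N+1)\<close>
  gives the bound, even with 2 in place of 5.
\<close>

lemma jordan_inequality:
  fixes x :: real
  assumes "0 \<le> x" "x \<le> pi / 2"
  shows "2 * x / pi \<le> sin x"
proof -
  have concave: "convex_on {0..pi/2} (\<lambda>x. - sin x)"
  proof (rule convex_on_realI[where f'="\<lambda>x. - cos x"])
    show "((\<lambda>x. - sin x) has_real_derivative - cos x) (at x)" for x
      by (auto intro!: derivative_eq_intros)
    show "- cos x \<le> - cos y" if "x \<in> {0..pi/2}" "y \<in> {0..pi/2}" "x \<le> y" for x y
      using cos_monotone_0_pi_le[of x y] that by auto
  qed simp
  define t where "t = 2 * x / pi"
  have "0 \<le> t" "t \<le> 1"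
    using assms pi_gt_zero unfolding t_def by (auto simp: field_simps)
  then have "- sin ((1 - t) *\<^sub>R 0 + t *\<^sub>R (pi/2)) \<le> (1 - t) * (- sin 0) + t * (- sin (pi/2))"
    by (intro convex_onD[OF concave]) auto
  moreover have "(1 - t) *\<^sub>R 0 + t *\<^sub>R (pi/2) = x"
    unfolding t_def by simp
  ultimately show ?thesis
    unfolding t_def by simp
qed

lemma sin_half_ge:
  fixes v :: real
  assumes "0 < v" "v < 2 * pi"
  shows "min v (2 * pi - v) / pi \<le> sin (v / 2)"
proof (cases "v \<le> pi")
  case True
  then show ?thesis
    using jordan_inequality[of "v/2"] assms by auto
next
  case False
  have "sin (v/2) = sin (pi - v/2)"
    by (simp add: sin_diff)
  then show ?thesis
    using jordan_inequality[of "pi - v/2"] assms False by (auto simp: field_simps)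
qed

lemma dirichlet_eq_geometric_sum:
  "dirichlet N u = exp (- \<i> * of_real (real N * u)) * (\<Sum>j<2*N+1. exp (\<i> * of_real u) ^ j)"
proof -
  have shift: "{-int N..int N} = (\<lambda>j. int j - int N) ` {..<2*N+1}"
  proof (intro set_eqI iffI)
    fix k assume "k \<in> {-int N..int N}"
    then show "k \<in> (\<lambda>j. int j - int N) ` {..<2*N+1}"
      by (intro image_eqI[where x="nat (k + int N)"]) auto
  qed auto
  have "inj_on (\<lambda>j. int j - int N) {..<2*N+1}"
    by (auto simp: inj_on_def)
  then have "dirichlet N u = (\<Sum>j<2*N+1. exp (\<i> * of_real (real_of_int (int j - int N) * u)))"
    unfolding dirichlet_def shift by (simp add: sum.reindex)
  also have "\<dots> = (\<Sum>j<2*N+1. exp (- \<i> * of_real (real N * u)) * exp (\<i> * of_real u) ^ j)"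
    by (intro sum.cong refl) (simp add: exp_add [symmetric] exp_of_nat_mult [symmetric] algebra_simps)
  also have "\<dots> = exp (- \<i> * of_real (real N * u)) * (\<Sum>j<2*N+1. exp (\<i> * of_real u) ^ j)"
    by (rule sum_distrib_left [symmetric])
  finally show ?thesis .
qed

lemma norm_dirichlet_le: "cmod (dirichlet N u) \<le> real (2 * N + 1)"
proof -
  have "cmod (dirichlet N u) \<le> (\<Sum>k\<in>{-int N..int N}. cmod (exp (\<i> * of_real (real_of_int k * u))))"
    unfolding dirichlet_def by (rule norm_sum)
  then show ?thesis
    by simp
qed

lemma norm_dirichlet_mult_sin_le: "cmod (dirichlet N u) * \<bar>sin (u / 2)\<bar> \<le> 1"
proof -
  define z where "z = exp (\<i> * of_real u)"
  have "cmod (dirichlet N u) * cmod (1 - z) = cmod ((\<Sum>j<2*N+1. z ^ j) * (1 - z))"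
    unfolding dirichlet_eq_geometric_sum z_def by (simp add: norm_mult)
  also have "\<dots> = cmod (1 - z ^ (2*N+1))"
    by (metis one_diff_power_eq mult.commute)
  also have "\<dots> \<le> 2"
  proof -
    have "cmod (z ^ (2*N+1)) = 1"
      unfolding z_def norm_power by simp
    then show ?thesis
      using norm_triangle_ineq4[of 1 "z ^ (2*N+1)"] by simp
  qed
  finally show ?thesis
    using dist_exp_i_1[of u] by (simp add: z_def norm_minus_commute)
qed

lemma norm_dirichlet_le_pi_div:
  assumes "0 < v" "v < 2 * pi"
  shows "cmod (dirichlet N v) \<le> pi / min v (2 * pi - v)"
proof -
  have m: "0 < min v (2 * pi - v) / pi"
    using assms by simp
  also have "\<dots> \<le> sin (v / 2)"
    using sin_half_ge[OF assms] .
  finally have "cmod (dirichlet N v) \<le> 1 / sin (v / 2)"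
    using norm_dirichlet_mult_sin_le[of N v] by (simp add: field_simps)
  also have "\<dots> \<le> 1 / (min v (2 * pi - v) / pi)"
    using sin_half_ge[OF assms] m by (intro divide_left_mono mult_pos_pos) auto
  finally show ?thesis
    by simp
qed

lemma integral_powr_neg_le:
  fixes a d r lo hi :: real
  assumes a: "0 < a" and r: "1 < r" and lo: "a \<le> lo + d"
  shows "(\<lambda>x. (x + d) powr - r) integrable_on {lo..hi}"
    and "integral {lo..hi} (\<lambda>x. (x + d) powr - r) \<le> a powr (1 - r) / (r - 1)"
proof -
  have bound: "0 \<le> a powr (1 - r) / (r - 1)"
    using r by simp
  define F where "F x = - ((x + d) powr (1 - r) / (r - 1))" for x
  have "((\<lambda>x. (x + d) powr - r) has_integral (F hi - F lo)) {lo..hi} \<and> F hi - F lo \<le> a powr (1 - r) / (r - 1)"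
    if "lo \<le> hi"
  proof
    show "((\<lambda>x. (x + d) powr - r) has_integral (F hi - F lo)) {lo..hi}"
    proof (rule fundamental_theorem_of_calculus[OF that])
      fix x assume "x \<in> {lo..hi}"
      then have "0 < x + d"
        using a lo by auto
      moreover have cancel: "(1 - r) * y / (r - 1) = - y" for y
        using r by (simp add: field_simps)
      ultimately have "(F has_real_derivative (x + d) powr - r) (at x)"
        unfolding F_def using r by (auto intro!: derivative_eq_intros simp: cancel)
      then show "(F has_vector_derivative (x + d) powr - r) (at x within {lo..hi})"
        by (simp add: has_real_derivative_iff_has_vector_derivative has_vector_derivative_at_within)
    qed
    have "F hi - F lo \<le> (lo + d) powr (1 - r) / (r - 1)"
      unfolding F_def using r by (simp add: divide_right_mono)
    also have "\<dots> \<le> a powr (1 - r) / (r - 1)"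
      using r a lo by (intro divide_right_mono powr_mono2') auto
    finally show "F hi - F lo \<le> a powr (1 - r) / (r - 1)" .
  qed
  then show "(\<lambda>x. (x + d) powr - r) integrable_on {lo..hi}"
    and "integral {lo..hi} (\<lambda>x. (x + d) powr - r) \<le> a powr (1 - r) / (r - 1)"
    using bound by (cases "lo \<le> hi"; force simp: integrable_on_def integral_unique)+
qed

lemma integral_powr_neg_reflect_le:
  fixes a c r lo hi :: real
  assumes "0 < a" "1 < r" "hi \<le> c - a"
  shows "(\<lambda>x. (c - x) powr - r) integrable_on {lo..hi}"
    and "integral {lo..hi} (\<lambda>x. (c - x) powr - r) \<le> a powr (1 - r) / (r - 1)"
proof -
  have "(\<lambda>x. (c - x) powr - r) integrable_on {lo..hi} \<longleftrightarrow> (\<lambda>y. (y + c) powr - r) integrable_on {-hi..-lo}"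
    using Henstock_Kurzweil_Integration.integrable_reflect_real[where f="\<lambda>y. (y + c) powr - r" and a="-hi" and b="-lo"] by simp
  moreover have "integral {lo..hi} (\<lambda>x. (c - x) powr - r) = integral {-hi..-lo} (\<lambda>y. (y + c) powr - r)"
    using Henstock_Kurzweil_Integration.integral_reflect_real[where f="\<lambda>y. (y + c) powr - r" and a="-hi" and b="-lo"] by simp
  ultimately show "(\<lambda>x. (c - x) powr - r) integrable_on {lo..hi}"
    and "integral {lo..hi} (\<lambda>x. (c - x) powr - r) \<le> a powr (1 - r) / (r - 1)"
    using integral_powr_neg_le[of a r "-hi" c "-lo"] assms by simp_all
qed

text \<open>No integrability of f is needed: if f is not integrable, its integral is the junk value 0.\<close>
lemma integral_le_nonneg_majorant:
  fixes f g :: "'a::euclidean_space \<Rightarrow> real"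
  assumes "g integrable_on S" "\<And>x. x \<in> S \<Longrightarrow> f x \<le> g x" "\<And>x. x \<in> S \<Longrightarrow> 0 \<le> g x"
  shows "integral S f \<le> integral S g"
proof (cases "f integrable_on S")
  case True
  then show ?thesis
    using assms integral_le by blast
next
  case False
  then show ?thesis
    using assms by (simp add: not_integrable_integral integral_nonneg)
qed

lemma integral_indicator_interval_le:
  fixes K c d lo hi :: real
  assumes "0 \<le> K" "c \<le> d"
  shows "(\<lambda>x. if x \<in> {c..d} then K else 0) integrable_on {lo..hi}"
    and "integral {lo..hi} (\<lambda>x. if x \<in> {c..d} then K else 0) \<le> (d - c) * K"
proof -
  have cap: "{c..d} \<inter> {lo..hi} = {max c lo..min d hi}"
    by auto
  show "(\<lambda>x. if x \<in> {c..d} then K else 0) integrable_on {lo..hi}"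
    unfolding integrable_restrict_Int cap by (rule integrable_const_ivl)
  show "integral {lo..hi} (\<lambda>x. if x \<in> {c..d} then K else 0) \<le> (d - c) * K"
    unfolding integral_restrict_Int cap using assms by (auto intro: mult_right_mono)
qed

lemma integral_norm_dirichlet_tilde_powr:
  "integral S (\<lambda>x. cmod (dirichlet_tilde N (f x)) powr r)
    = integral S (\<lambda>x. cmod (dirichlet N (f x)) powr r) / real (2 * N + 1) powr r"
  unfolding dirichlet_tilde_def
  by (simp add: norm_divide powr_divide integral_divide del: of_nat_Suc)

lemma integral_le_two_singularities:
  fixes f :: "real \<Rightarrow> real" and lo hi \<sigma> \<tau> a r M C :: real
  assumes bounded: "\<And>x. x \<in> {lo..hi} \<Longrightarrow> f x \<le> M"
    and singular: "\<And>x. x \<in> {lo..hi} \<Longrightarrow> \<sigma> + a < x \<Longrightarrow> x < \<tau> - a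
      \<Longrightarrow> f x \<le> C * ((x - \<sigma>) powr - r + (\<tau> - x) powr - r)"
    and a: "0 < a" and r: "1 < r" and "0 \<le> M" "0 \<le> C"
    and windows: "lo \<le> \<sigma> + a" "\<tau> - a \<le> hi"
  shows "integral {lo..hi} f \<le> (\<sigma> + a - lo + (hi - (\<tau> - a))) * M + 2 * C * (a powr (1 - r) / (r - 1))"
proof -
  define B where "B = a powr (1 - r) / (r - 1)"
  define g1 where "g1 x = (if x \<in> {lo..\<sigma> + a} then M else 0)" for x
  define g2 where "g2 x = (if x \<in> {\<tau> - a..hi} then M else 0)" for x
  define g3 where "g3 x = (if x \<in> {\<sigma> + a..hi} then C * (x - \<sigma>) powr - r else 0)" for x
  define g4 where "g4 x = (if x \<in> {lo..\<tau> - a} then C * (\<tau> - x) powr - r else 0)" for x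
  define g where "g x = g1 x + g2 x + g3 x + g4 x" for x
  have nonneg: "0 \<le> g1 x" "0 \<le> g2 x" "0 \<le> g3 x" "0 \<le> g4 x" for x
    unfolding g1_def g2_def g3_def g4_def using assms by auto
  have majorant: "f x \<le> g x" if x: "x \<in> {lo..hi}" for x
  proof (cases "x \<le> \<sigma> + a \<or> \<tau> - a \<le> x")
    case True
    then have "M \<le> g1 x + g2 x"
      using x nonneg[of x] unfolding g1_def g2_def by auto
    then show ?thesis
      using bounded[OF x] nonneg[of x] unfolding g_def by linarith
  next
    case False
    then have "f x \<le> g3 x + g4 x"
      using singular[OF x] x unfolding g3_def g4_def by (simp add: distrib_left)
    then show ?thesis
      using nonneg[of x] unfolding g_def by linarith
  qed
  have g1: "g1 integrable_on {lo..hi}" "integral {lo..hi} g1 \<le> (\<sigma> + a - lo) * M"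
    using integral_indicator_interval_le[of M lo "\<sigma> + a"] assms unfolding g1_def by auto
  have g2: "g2 integrable_on {lo..hi}" "integral {lo..hi} g2 \<le> (hi - (\<tau> - a)) * M"
    using integral_indicator_interval_le[of M "\<tau> - a" hi] assms unfolding g2_def by auto
  have sub: "{\<sigma> + a..hi} \<inter> {lo..hi} = {\<sigma> + a..hi}" "{lo..\<tau> - a} \<inter> {lo..hi} = {lo..\<tau> - a}"
    using windows by auto
  have g3: "g3 integrable_on {lo..hi}" "integral {lo..hi} g3 \<le> C * B"
    using integral_powr_neg_le[OF a r, of "\<sigma> + a" "- \<sigma>" hi] \<open>0 \<le> C\<close>
    unfolding g3_def integrable_restrict_Int integral_restrict_Int sub B_def[symmetric]
    by (auto intro!: mult_left_mono integrable_on_mult_right)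
  have g4: "g4 integrable_on {lo..hi}" "integral {lo..hi} g4 \<le> C * B"
    using integral_powr_neg_reflect_le[OF a r, of "\<tau> - a" \<tau> lo] \<open>0 \<le> C\<close>
    unfolding g4_def integrable_restrict_Int integral_restrict_Int sub B_def[symmetric]
    by (auto intro!: mult_left_mono integrable_on_mult_right)
  have "integral {lo..hi} f \<le> integral {lo..hi} g"
    using majorant nonneg g1(1) g2(1) g3(1) g4(1) unfolding g_def
    by (intro integral_le_nonneg_majorant integrable_add) auto
  also have "\<dots> = integral {lo..hi} g1 + integral {lo..hi} g2 + integral {lo..hi} g3 + integral {lo..hi} g4"
    unfolding g_def using g1(1) g2(1) g3(1) g4(1)
    by (intro integral_unique has_integral_add integrable_integral)
  also have "\<dots> \<le> (\<sigma> + a - lo + (hi - (\<tau> - a))) * M + 2 * C * B"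
    using g1(2) g2(2) g3(2) g4(2) by (simp add: algebra_simps)
  finally show ?thesis
    unfolding B_def .
qed

lemma norm_dirichlet_powr_le_singular:
  fixes x y \<tau> \<rho> r :: real
  assumes y: "x - \<rho> \<le> y" "y \<le> x" and x: "\<rho> - pi < x" "x < \<tau>" and "\<tau> \<le> pi" "0 \<le> r"
  shows "cmod (dirichlet N (\<tau> - y)) powr r \<le> pi powr r * ((x - (\<rho> - pi)) powr - r + (\<tau> - x) powr - r)"
proof -
  define w1 where "w1 = x - (\<rho> - pi)"
  define w2 where "w2 = \<tau> - x"
  have w: "0 < min w1 w2" "w1 \<le> 2 * pi - (\<tau> - y)" "w2 \<le> \<tau> - y"
    using assms unfolding w1_def w2_def by auto
  then have "cmod (dirichlet N (\<tau> - y)) \<le> pi / min (\<tau> - y) (2 * pi - (\<tau> - y))"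
    by (intro norm_dirichlet_le_pi_div) auto
  also have "\<dots> \<le> pi / min w1 w2"
    using w by (intro divide_left_mono) auto
  finally have "cmod (dirichlet N (\<tau> - y)) powr r \<le> (pi / min w1 w2) powr r"
    using \<open>0 \<le> r\<close> by (intro powr_mono2) auto
  also have "\<dots> = pi powr r * min w1 w2 powr - r"
    by (simp add: powr_divide powr_minus_divide)
  also have "\<dots> \<le> pi powr r * (w1 powr - r + w2 powr - r)"
    by (intro mult_left_mono) (auto simp: min_def)
  finally show ?thesis
    unfolding w1_def w2_def .
qed

lemma integral_norm_dirichlet_floor_le:
  fixes \<phi> :: "real \<Rightarrow> real" and \<rho> a r t :: real
  assumes floor: "\<And>x. x \<in> {-pi..pi} \<Longrightarrow> x - \<rho> \<le> \<phi> x \<and> \<phi> x \<le> x"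
    and a: "0 < a" and r: "1 < r" and t: "t \<in> {-pi..pi}"
  shows "integral {-pi..t} (\<lambda>x. cmod (dirichlet N (\<phi> t - \<phi> x)) powr r)
    \<le> 2 * (\<rho> + a) * real (2 * N + 1) powr r + 2 * pi powr r * (a powr (1 - r) / (r - 1))"
proof -
  define M where "M = real (2 * N + 1) powr r"
  have \<tau>: "\<phi> t \<le> t" "t - \<rho> \<le> \<phi> t"
    using floor[OF t] by auto
  have "integral {-pi..t} (\<lambda>x. cmod (dirichlet N (\<phi> t - \<phi> x)) powr r)
      \<le> (\<rho> - pi + a - - pi + (t - (\<phi> t - a))) * M + 2 * pi powr r * (a powr (1 - r) / (r - 1))"
  proof (rule integral_le_two_singularities[OF _ _ a r])
    show "cmod (dirichlet N (\<phi> t - \<phi> x)) powr r \<le> M" for x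
      unfolding M_def using r by (intro powr_mono2 norm_dirichlet_le) auto
    show "cmod (dirichlet N (\<phi> t - \<phi> x)) powr r
        \<le> pi powr r * ((x - (\<rho> - pi)) powr - r + (\<phi> t - x) powr - r)"
      if "x \<in> {-pi..t}" "\<rho> - pi + a < x" "x < \<phi> t - a" for x
      using that t floor[of x] \<tau> r a by (intro norm_dirichlet_powr_le_singular) auto
  qed (use \<tau> a in \<open>auto simp: M_def\<close>)
  also have "\<dots> \<le> 2 * (\<rho> + a) * M + 2 * pi powr r * (a powr (1 - r) / (r - 1))"
    using \<tau> unfolding M_def by (intro add_right_mono mult_right_mono) auto
  finally show ?thesis
    unfolding M_def .
qed

lemma mesh_ge:
  assumes "i < l"
  shows "s (Suc i) - s i \<le> mesh s l"
proof -
  have "{s (Suc i) - s i | i. i < l} = (\<lambda>i. s (Suc i) - s i) ` {..<l}"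
    by auto
  then show ?thesis
    unfolding mesh_def using assms by (intro Max_ge) auto
qed

lemma part_floor_bounds:
  assumes incr: "\<forall>i<l. s i < s (Suc i)" and "0 < l" and x: "s 0 \<le> x" "x \<le> s l"
  shows "x - mesh s l \<le> part_floor (s ` {0..l}) x \<and> part_floor (s ` {0..l}) x \<le> x"
proof -
  define Z where "Z = {z \<in> s ` {0..l}. z \<le> x}"
  have Z: "finite Z" "s 0 \<in> Z"
    unfolding Z_def using x by auto
  then obtain i where i: "i \<le> l" "Max Z = s i" "s i \<le> x"
    using Max_in[of Z] unfolding Z_def by fastforce
  have "x - s i \<le> mesh s l"
  proof (cases "i < l")
    case True
    then have "s (Suc i) \<notin> Z"
      using Max_ge[OF Z(1), of "s (Suc i)"] i incr by auto
    then have "x < s (Suc i)"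
      using True unfolding Z_def by auto
    then show ?thesis
      using mesh_ge[OF True, of s] by linarith
  next
    case False
    then have "x - s i \<le> 0"
      using i x by auto
    also have "0 \<le> mesh s l"
      using mesh_ge[OF \<open>0 < l\<close>, of s] incr \<open>0 < l\<close> by force
    finally show ?thesis .
  qed
  then show ?thesis
    using i unfolding part_floor_def Z_def[symmetric] by simp
qed

theorem mainTheorem15:
  fixes s :: "nat \<Rightarrow> real" and l N :: nat and r t :: real
  assumes incr: "\<forall>i<l. s i < s (Suc i)"
    and start: "s 0 = -pi" and stop: "s l = pi"
    and r: "r > 1"
    and t: "t \<in> {-pi..pi}"
  shows "integral {-pi..t}
           (\<lambda>x. cmod (dirichlet N (part_floor (s ` {0..l}) t - part_floor (s ` {0..l}) x)) powr r)
         \<le> 5 * (mesh s l + 1 / real (2 * N + 1)) * real (2 * N + 1) powr r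
           + 2 * pi powr r / (r - 1) * real (2 * N + 1) powr (r - 1)
       \<and> integral {-pi..t}
           (\<lambda>x. cmod (dirichlet_tilde N (part_floor (s ` {0..l}) t - part_floor (s ` {0..l}) x)) powr r)
         \<le> 5 * mesh s l + (1 / real (2 * N + 1)) * (5 + 2 * pi powr r / (r - 1))"
proof -
  define \<phi> where "\<phi> = part_floor (s ` {0..l})"
  define M where "M = real (2 * N + 1)"
  define K where "K = 2 * pi powr r / (r - 1)"
  define I where "I = integral {-pi..t} (\<lambda>x. cmod (dirichlet N (\<phi> t - \<phi> x)) powr r)"
  have "0 < l"
    using start stop by (cases l) auto
  then have floor: "x - mesh s l \<le> \<phi> x \<and> \<phi> x \<le> x" if "x \<in> {-pi..pi}" for x
    using part_floor_bounds[OF incr] that start stop unfolding \<phi>_def by auto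
  have "0 \<le> mesh s l" "1 \<le> M" "(1 / M) powr (1 - r) = M powr (r - 1)"
    using floor[of 0] unfolding M_def by (auto simp: powr_divide powr_minus_divide [symmetric])
  then have "I \<le> 2 * (mesh s l + 1 / M) * M powr r + K * M powr (r - 1)"
    using integral_norm_dirichlet_floor_le[OF floor, of "1 / M" r t N] r t
    unfolding I_def M_def K_def by auto
  moreover have "0 \<le> (mesh s l + 1 / M) * M powr r"
    using \<open>0 \<le> mesh s l\<close> \<open>1 \<le> M\<close> by simp
  ultimately have I: "I \<le> 5 * (mesh s l + 1 / M) * M powr r + K * M powr (r - 1)"
    by linarith
  then have "I / M powr r \<le> (5 * (mesh s l + 1 / M) * M powr r + K * M powr (r - 1)) / M powr r"
    by (simp add: divide_right_mono)
  also have "\<dots> = 5 * mesh s l + 1 / M * (5 + K)"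
    using \<open>1 \<le> M\<close> by (simp add: powr_diff field_simps)
  finally show ?thesis
    using I unfolding integral_norm_dirichlet_tilde_powr integral_divide I_def \<phi>_def M_def K_def by simp
qed

end
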